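(* Let $p\in\Delta_7$ have at least one vanishing entry. Then $p\in\operatorname{RBM}_{3,2}$ if and only if for every state $x\in\{0,1\}^3$ with $p_x=0$ there is a Hamming neighbour $y$ of $x$ with $p_y=0$.
   Context: A distribution of three binary random variables is a $2\times2\times2$ tensor $p=(p_x)_{x\in\{0,1\}^3}$ with nonnegative entries summing to $1$; the set of these is $\Delta_7$. Two states are Hamming neighbours if they differ in exactly one coordinate. For $a,b,c\in\mathbb{R}^2_{\ge0}$, $a\otimes b\otimes c$ is the tensor with entries $a_ib_jc_k$. $\operatorname{RBM}_{3,2}$ is the set of $p\in\Delta_7$ of the form $p=(a_1\otimes b_1\otimes c_1+d_1\otimes e_1\otimes f_1)*(a_2\otimes b_2\otimes c_2+d_2\otimes e_2\otimes f_2)$ with all vectors in $\mathbb{R}^2_{\ge0}$, where $*$ is the entrywise (Hadamard) product. *)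

theory Defs
  imports Complex_Main
begin

text \<open>States of three binary variables: x = (x1,x2,x3) in {0,1}^3, with bool encoding {0,1}
  (False = 0, True = 1). A distribution is a real function on states.\<close>

type_synonym state3 = "bool \<times> bool \<times> bool"

definition simplex7 :: "(state3 \<Rightarrow> real) set" where
  "simplex7 = {p. (\<forall>x. 0 \<le> p x) \<and> (\<Sum>x\<in>UNIV. p x) = 1}"

definition hamming_neighbour :: "state3 \<Rightarrow> state3 \<Rightarrow> bool" where
  "hamming_neighbour x y \<longleftrightarrow>
     card {i::nat. i < 3 \<and> [fst x, fst (snd x), snd (snd x)] ! i \<noteq> [fst y, fst (snd y), snd (snd y)] ! i} = 1"

definition nonneg2 :: "(bool \<Rightarrow> real) \<Rightarrow> bool" where
  "nonneg2 a \<longleftrightarrow> (\<forall>i. 0 \<le> a i)"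

definition tensor3 :: "(bool \<Rightarrow> real) \<Rightarrow> (bool \<Rightarrow> real) \<Rightarrow> (bool \<Rightarrow> real) \<Rightarrow> state3 \<Rightarrow> real" where
  "tensor3 a b c = (\<lambda>(i, j, k). a i * b j * c k)"

definition RBM32 :: "(state3 \<Rightarrow> real) set" where
  "RBM32 = {p. p \<in> simplex7 \<and>
     (\<exists>a1 b1 c1 d1 e1 f1 a2 b2 c2 d2 e2 f2.
        nonneg2 a1 \<and> nonneg2 b1 \<and> nonneg2 c1 \<and> nonneg2 d1 \<and> nonneg2 e1 \<and> nonneg2 f1 \<and>
        nonneg2 a2 \<and> nonneg2 b2 \<and> nonneg2 c2 \<and> nonneg2 d2 \<and> nonneg2 e2 \<and> nonneg2 f2 \<and>
        (\<forall>x. p x = (tensor3 a1 b1 c1 x + tensor3 d1 e1 f1 x) * (tensor3 a2 b2 c2 x + tensor3 d2 e2 f2 x)))}"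

end

theory Submission
  imports Defs
begin

text \<open>A sum of two nonnegative product tensors vanishes at a state \<open>x\<close> only if both products do,
  and a product vanishing at \<open>x\<close> vanishes on a whole coordinate plane through \<open>x\<close>. Two coordinate
  planes through a vertex of the cube always share a neighbour of it, so the zeros of a product
  of two such mixtures are never isolated.

  Conversely, zeros that are not isolated contain an edge of the cube, which after permuting
  coordinates is the line \<open>x\<^sub>1 = u, x\<^sub>2 = v\<close>. Then either the opposite line
  \<open>x\<^sub>1 = \<not>u, x\<^sub>2 = \<not>v\<close> vanishes too, and \<open>p\<close> is a sum of two products on disjoint blocks,
  or (possibly after swapping the first two coordinates) the slice \<open>x\<^sub>1 = u\<close> is supported on
  one line inside the support of the slice \<open>x\<^sub>1 = \<not>u\<close>, and \<open>p\<close> is that slice, extended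
  constantly in \<open>x\<^sub>1\<close>, times a factor rescaling it onto \<open>x\<^sub>1 = u\<close>.\<close>

lemma hamming_neighbour_iff:
  "hamming_neighbour (i, j, k) y \<longleftrightarrow> y = (\<not> i, j, k) \<or> y = (i, \<not> j, k) \<or> y = (i, j, \<not> k)"
proof -
  have three: "{n::nat. n < 3 \<and> P n} =
      (if P 0 then {0} else {}) \<union> (if P 1 then {1} else {}) \<union> (if P 2 then {2} else {})" for P
  proof (rule set_eqI, rule iffI)
    fix n :: nat
    assume "n \<in> {n. n < 3 \<and> P n}"
    then have "n = 0 \<or> n = 1 \<or> n = 2" and "P n" by auto
    then show "n \<in> (if P 0 then {0} else {}) \<union> (if P 1 then {1} else {}) \<union> (if P 2 then {2} else {})"
      by (elim disjE) simp_all
  qed (auto split: if_splits)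
  show ?thesis
    unfolding hamming_neighbour_def three by (cases y) (auto split: if_splits)
qed

definition mixture2 :: "(state3 \<Rightarrow> real) set" where
  "mixture2 = {(\<lambda>x. tensor3 a b c x + tensor3 d e f x) | a b c d e f.
     nonneg2 a \<and> nonneg2 b \<and> nonneg2 c \<and> nonneg2 d \<and> nonneg2 e \<and> nonneg2 f}"

definition prod_mixture2 :: "(state3 \<Rightarrow> real) \<Rightarrow> bool" where
  "prod_mixture2 p \<longleftrightarrow> (\<exists>F \<in> mixture2. \<exists>G \<in> mixture2. \<forall>x. p x = F x * G x)"

definition no_isolated_zero :: "(state3 \<Rightarrow> real) \<Rightarrow> bool" where
  "no_isolated_zero p \<longleftrightarrow> (\<forall>x. p x = 0 \<longrightarrow> (\<exists>y. hamming_neighbour x y \<and> p y = 0))"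

lemma mixture2I:
  "\<lbrakk>nonneg2 a; nonneg2 b; nonneg2 c; nonneg2 d; nonneg2 e; nonneg2 f\<rbrakk>
    \<Longrightarrow> (\<lambda>x. tensor3 a b c x + tensor3 d e f x) \<in> mixture2"
  unfolding mixture2_def by blast

lemma RBM32_iff: "p \<in> RBM32 \<longleftrightarrow> p \<in> simplex7 \<and> prod_mixture2 p"
proof -
  have "prod_mixture2 p \<longleftrightarrow> (\<exists>a1 b1 c1 d1 e1 f1 a2 b2 c2 d2 e2 f2.
        nonneg2 a1 \<and> nonneg2 b1 \<and> nonneg2 c1 \<and> nonneg2 d1 \<and> nonneg2 e1 \<and> nonneg2 f1 \<and>
        nonneg2 a2 \<and> nonneg2 b2 \<and> nonneg2 c2 \<and> nonneg2 d2 \<and> nonneg2 e2 \<and> nonneg2 f2 \<and>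
        (\<forall>x. p x = (tensor3 a1 b1 c1 x + tensor3 d1 e1 f1 x) * (tensor3 a2 b2 c2 x + tensor3 d2 e2 f2 x)))"
    (is "_ \<longleftrightarrow> ?factorisation")
  proof
    assume "prod_mixture2 p"
    then obtain F G where "F \<in> mixture2" "G \<in> mixture2" and p: "\<forall>x. p x = F x * G x"
      unfolding prod_mixture2_def by blast
    from \<open>F \<in> mixture2\<close> obtain a1 b1 c1 d1 e1 f1
      where "nonneg2 a1" "nonneg2 b1" "nonneg2 c1" "nonneg2 d1" "nonneg2 e1" "nonneg2 f1"
        and F: "F = (\<lambda>x. tensor3 a1 b1 c1 x + tensor3 d1 e1 f1 x)"
      unfolding mixture2_def by blast
    moreover from \<open>G \<in> mixture2\<close> obtain a2 b2 c2 d2 e2 f2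
      where "nonneg2 a2" "nonneg2 b2" "nonneg2 c2" "nonneg2 d2" "nonneg2 e2" "nonneg2 f2"
        and G: "G = (\<lambda>x. tensor3 a2 b2 c2 x + tensor3 d2 e2 f2 x)"
      unfolding mixture2_def by blast
    ultimately show ?factorisation
    proof (intro exI conjI)
      show "\<forall>x. p x = (tensor3 a1 b1 c1 x + tensor3 d1 e1 f1 x) * (tensor3 a2 b2 c2 x + tensor3 d2 e2 f2 x)"
        using p unfolding F G .
    qed
  next
    assume ?factorisation
    then obtain a1 b1 c1 d1 e1 f1 a2 b2 c2 d2 e2 f2
      where "nonneg2 a1" "nonneg2 b1" "nonneg2 c1" "nonneg2 d1" "nonneg2 e1" "nonneg2 f1"
        and "nonneg2 a2" "nonneg2 b2" "nonneg2 c2" "nonneg2 d2" "nonneg2 e2" "nonneg2 f2"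
        and p: "\<forall>x. p x = (tensor3 a1 b1 c1 x + tensor3 d1 e1 f1 x) * (tensor3 a2 b2 c2 x + tensor3 d2 e2 f2 x)"
      by (elim exE conjE) (rule that; assumption)
    then have F: "(\<lambda>x. tensor3 a1 b1 c1 x + tensor3 d1 e1 f1 x) \<in> mixture2"
      and G: "(\<lambda>x. tensor3 a2 b2 c2 x + tensor3 d2 e2 f2 x) \<in> mixture2"
      by (simp_all add: mixture2I)
    show "prod_mixture2 p"
      unfolding prod_mixture2_def by (rule bexI[OF bexI[OF _ G] F]) (simp add: p)
  qed
  then show ?thesis unfolding RBM32_def by simp
qed

lemma tensor3_nonneg: "\<lbrakk>nonneg2 a; nonneg2 b; nonneg2 c\<rbrakk> \<Longrightarrow> 0 \<le> tensor3 a b c x"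
  by (cases x) (simp add: tensor3_def nonneg2_def)

lemma mixture2_zero_neighbour:
  assumes "F \<in> mixture2" and "F x = 0"
  shows "\<exists>y. hamming_neighbour x y \<and> F y = 0"
proof -
  obtain a b c d e f where nonneg: "nonneg2 a" "nonneg2 b" "nonneg2 c" "nonneg2 d" "nonneg2 e" "nonneg2 f"
    and F: "F = (\<lambda>x. tensor3 a b c x + tensor3 d e f x)"
    using assms(1) unfolding mixture2_def by blast
  obtain i j k where x: "x = (i, j, k)" by (cases x)
  have "tensor3 a b c x = 0" "tensor3 d e f x = 0"
    using assms(2) tensor3_nonneg[OF nonneg(1-3)] tensor3_nonneg[OF nonneg(4-6)]
    by (simp_all add: F add_nonneg_eq_0_iff)
  then have "a i = 0 \<or> b j = 0 \<or> c k = 0" "d i = 0 \<or> e j = 0 \<or> f k = 0"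
    by (simp_all add: x tensor3_def)
  then have "F (\<not> i, j, k) = 0 \<or> F (i, \<not> j, k) = 0 \<or> F (i, j, \<not> k) = 0"
    by (elim disjE) (simp_all add: F tensor3_def)
  then show ?thesis
    unfolding x hamming_neighbour_iff by blast
qed

lemma no_isolated_zero_prod_mixture2:
  assumes "prod_mixture2 p"
  shows "no_isolated_zero p"
  unfolding no_isolated_zero_def
proof (intro allI impI)
  fix x
  assume "p x = 0"
  from assms obtain F G where "F \<in> mixture2" "G \<in> mixture2" and p: "\<forall>x. p x = F x * G x"
    unfolding prod_mixture2_def by blast
  with \<open>p x = 0\<close> mixture2_zero_neighbour show "\<exists>y. hamming_neighbour x y \<and> p y = 0"
    by (metis mult_eq_0_iff)
qed

definition swap12 :: "state3 \<Rightarrow> state3" where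
  "swap12 = (\<lambda>(i, j, k). (j, i, k))"

definition swap13 :: "state3 \<Rightarrow> state3" where
  "swap13 = (\<lambda>(i, j, k). (k, j, i))"

definition swap23 :: "state3 \<Rightarrow> state3" where
  "swap23 = (\<lambda>(i, j, k). (i, k, j))"

definition coord_involutions :: "(state3 \<Rightarrow> state3) set" where
  "coord_involutions = {id, swap12, swap13, swap23}"

lemma coord_swap_involutive:
  "\<sigma> \<in> coord_involutions \<Longrightarrow> \<sigma> (\<sigma> x) = x"
  by (cases x) (auto simp: coord_involutions_def swap12_def swap13_def swap23_def)

lemma hamming_neighbour_coord_swap:
  "\<sigma> \<in> coord_involutions \<Longrightarrow> hamming_neighbour (\<sigma> x) (\<sigma> y) \<longleftrightarrow> hamming_neighbour x y"
  by (cases x; cases y)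
    (auto simp: coord_involutions_def hamming_neighbour_iff swap12_def swap13_def swap23_def)

lemma tensor3_coord_swap:
  "tensor3 a b c (swap12 x) = tensor3 b a c x"
  "tensor3 a b c (swap13 x) = tensor3 c b a x"
  "tensor3 a b c (swap23 x) = tensor3 a c b x"
  by (cases x; simp add: tensor3_def swap12_def swap13_def swap23_def mult_ac)+

lemma mixture2_comp_coord_swap:
  assumes "\<sigma> \<in> coord_involutions" and "F \<in> mixture2"
  shows "F \<circ> \<sigma> \<in> mixture2"
proof -
  obtain a b c d e f where "nonneg2 a" "nonneg2 b" "nonneg2 c" "nonneg2 d" "nonneg2 e" "nonneg2 f"
    and F: "F = (\<lambda>x. tensor3 a b c x + tensor3 d e f x)"
    using assms(2) unfolding mixture2_def by blast
  with assms(1) show ?thesis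
    by (auto simp: coord_involutions_def comp_def tensor3_coord_swap intro!: mixture2I)
qed

lemma prod_mixture2_comp_coord_swap:
  assumes "\<sigma> \<in> coord_involutions" and "prod_mixture2 (p \<circ> \<sigma>)"
  shows "prod_mixture2 p"
proof -
  obtain F G where "F \<in> mixture2" "G \<in> mixture2" and pF: "\<forall>x. p (\<sigma> x) = F x * G x"
    using assms(2) unfolding prod_mixture2_def by auto
  then have "F \<circ> \<sigma> \<in> mixture2" "G \<circ> \<sigma> \<in> mixture2"
    using assms(1) by (simp_all add: mixture2_comp_coord_swap)
  moreover have "\<forall>x. p x = (F \<circ> \<sigma>) x * (G \<circ> \<sigma>) x"
    using pF coord_swap_involutive[OF assms(1)] by (metis comp_apply)
  ultimately show ?thesis
    unfolding prod_mixture2_def by blast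
qed

lemma no_isolated_zero_comp_coord_swap:
  assumes "\<sigma> \<in> coord_involutions" and "no_isolated_zero p"
  shows "no_isolated_zero (p \<circ> \<sigma>)"
  unfolding no_isolated_zero_def
proof (intro allI impI)
  fix x
  assume "(p \<circ> \<sigma>) x = 0"
  then obtain y where "hamming_neighbour (\<sigma> x) y" "p y = 0"
    using assms(2) unfolding no_isolated_zero_def comp_apply by blast
  then have "hamming_neighbour x (\<sigma> y)" "(p \<circ> \<sigma>) (\<sigma> y) = 0"
    using hamming_neighbour_coord_swap[OF assms(1), of x "\<sigma> y"] coord_swap_involutive[OF assms(1)]
    by simp_all
  then show "\<exists>y. hamming_neighbour x y \<and> (p \<circ> \<sigma>) y = 0" by blast
qed

lemma prod_mixture2_zero_line_support:
  assumes nonneg: "\<forall>x. 0 \<le> p x"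
    and line: "\<forall>k. p (u, v, k) = 0"
    and support: "\<forall>k. p (\<not> u, \<not> v, k) = 0 \<longrightarrow> p (u, \<not> v, k) = 0"
  shows "prod_mixture2 p"
proof -
  text \<open>\<open>G\<close> copies the slice \<open>x\<^sub>1 = \<not>u\<close>; \<open>F\<close> is \<open>1\<close> there and rescales it onto the slice
    \<open>x\<^sub>1 = u\<close>, which lives on the line \<open>x\<^sub>2 = \<not>v\<close>. Where \<open>r\<close> divides by zero, \<open>support\<close>
    makes the value irrelevant.\<close>
  define r where "r k = p (u, \<not> v, k) / p (\<not> u, \<not> v, k)" for k
  define F where "F = (\<lambda>x. tensor3 (\<lambda>i. of_bool (i \<noteq> u)) (\<lambda>_. 1) (\<lambda>_. 1) x
      + tensor3 (\<lambda>i. of_bool (i = u)) (\<lambda>j. of_bool (j \<noteq> v)) r x)"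
  define G where "G = (\<lambda>x. tensor3 (\<lambda>_. 1) (\<lambda>j. of_bool (\<not> j)) (\<lambda>k. p (\<not> u, False, k)) x
      + tensor3 (\<lambda>_. 1) (\<lambda>j. of_bool j) (\<lambda>k. p (\<not> u, True, k)) x)"
  have "F \<in> mixture2" "G \<in> mixture2"
    unfolding F_def G_def using nonneg by (auto intro!: mixture2I simp: nonneg2_def r_def)
  moreover have "p x = F x * G x" for x
  proof -
    obtain i j k where x: "x = (i, j, k)" by (cases x)
    have "G x = p (\<not> u, j, k)"
      by (cases j) (simp_all add: G_def x tensor3_def)
    moreover have "p (i, j, k) = F (i, j, k) * p (\<not> u, j, k)"
      using line support
      by (cases "i = u"; cases "j = v"; cases "p (\<not> u, \<not> v, k) = 0")
        (auto simp: F_def tensor3_def r_def)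
    ultimately show ?thesis by (simp add: x)
  qed
  ultimately show ?thesis
    unfolding prod_mixture2_def by blast
qed

lemma prod_mixture2_two_zero_lines:
  assumes nonneg: "\<forall>x. 0 \<le> p x"
    and "\<forall>k. p (u, v, k) = 0" and "\<forall>k. p (\<not> u, \<not> v, k) = 0"
  shows "prod_mixture2 p"
proof -
  define F where "F = (\<lambda>x. tensor3 (\<lambda>_. 1) (\<lambda>_. 1) (\<lambda>_. 1) x + tensor3 (\<lambda>_. 0) (\<lambda>_. 0) (\<lambda>_. 0) x)"
  define G where "G = (\<lambda>x. tensor3 (\<lambda>i. of_bool (i = u)) (\<lambda>j. of_bool (j \<noteq> v)) (\<lambda>k. p (u, \<not> v, k)) x
      + tensor3 (\<lambda>i. of_bool (i \<noteq> u)) (\<lambda>j. of_bool (j = v)) (\<lambda>k. p (\<not> u, v, k)) x)"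
  have "F \<in> mixture2" "G \<in> mixture2"
    unfolding F_def G_def using nonneg by (auto intro!: mixture2I simp: nonneg2_def)
  moreover have "p x = F x * G x" for x
    using assms(2,3) by (cases x; cases u; cases v) (auto simp: F_def G_def tensor3_def)
  ultimately show ?thesis
    unfolding prod_mixture2_def by blast
qed

lemma no_isolated_zero_line_trichotomy:
  assumes "no_isolated_zero p"
  shows "(\<forall>k. p (\<not> u, \<not> v, k) = 0 \<longrightarrow> p (u, \<not> v, k) = 0)
    \<or> (\<forall>k. p (\<not> u, \<not> v, k) = 0 \<longrightarrow> p (\<not> u, v, k) = 0)
    \<or> (\<forall>k. p (\<not> u, \<not> v, k) = 0)"
proof (rule ccontr)
  assume "\<not> ?thesis"
  then obtain k k' k'' where k: "p (\<not> u, \<not> v, k) = 0" "p (u, \<not> v, k) \<noteq> 0"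
    and k': "p (\<not> u, \<not> v, k') = 0" "p (\<not> u, v, k') \<noteq> 0"
    and k'': "p (\<not> u, \<not> v, k'') \<noteq> 0"
    by blast
  have "k' = k" and "k'' = (\<not> k)"
    using k k' k'' by (cases k; cases k'; cases k''; simp)+
  text \<open>Both neighbours of the zero \<open>(\<not>u, \<not>v, k)\<close> in the first two coordinates are nonzero.\<close>
  obtain y where "hamming_neighbour (\<not> u, \<not> v, k) y" "p y = 0"
    using assms(1) k(1) unfolding no_isolated_zero_def by blast
  with k k' \<open>k' = k\<close> have "p (\<not> u, \<not> v, \<not> k) = 0"
    by (auto simp: hamming_neighbour_iff)
  with k'' \<open>k'' = (\<not> k)\<close> show False
    by simp
qed

lemma prod_mixture2_zero_line:
  assumes nonneg: "\<forall>x. 0 \<le> p x" and "no_isolated_zero p" and line: "\<forall>k. p (u, v, k) = 0"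
  shows "prod_mixture2 p"
  using no_isolated_zero_line_trichotomy[OF assms(2), of u v]
proof (elim disjE)
  assume "\<forall>k. p (\<not> u, \<not> v, k) = 0 \<longrightarrow> p (u, \<not> v, k) = 0"
  with nonneg line show ?thesis by (rule prod_mixture2_zero_line_support)
next
  assume support: "\<forall>k. p (\<not> u, \<not> v, k) = 0 \<longrightarrow> p (\<not> u, v, k) = 0"
  have "prod_mixture2 (p \<circ> swap12)"
    by (rule prod_mixture2_zero_line_support[where u = v and v = u])
      (use nonneg line support in \<open>simp_all add: swap12_def\<close>)
  then show ?thesis by (rule prod_mixture2_comp_coord_swap[rotated]) (simp add: coord_involutions_def)
next
  assume "\<forall>k. p (\<not> u, \<not> v, k) = 0"
  with nonneg line show ?thesis by (rule prod_mixture2_two_zero_lines)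
qed

lemma zero_line_exists:
  assumes "no_isolated_zero p" and "p x = 0"
  shows "\<exists>\<sigma> \<in> coord_involutions. \<exists>u v. \<forall>k. p (\<sigma> (u, v, k)) = 0"
proof -
  obtain i j k where x: "x = (i, j, k)" by (cases x)
  from assms obtain y where "hamming_neighbour x y" "p y = 0"
    unfolding no_isolated_zero_def by blast
  then consider "p (\<not> i, j, k) = 0" | "p (i, \<not> j, k) = 0" | "p (i, j, \<not> k) = 0"
    unfolding x hamming_neighbour_iff by blast
  then show ?thesis
  proof cases
    case 1
    then have "\<forall>t. p (swap13 (k, j, t)) = 0"
      using assms(2) x by (cases i) (simp_all add: all_bool_eq swap13_def)
    then show ?thesis unfolding coord_involutions_def by blast
  next
    case 2
    then have "\<forall>t. p (swap23 (i, k, t)) = 0"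
      using assms(2) x by (cases j) (simp_all add: all_bool_eq swap23_def)
    then show ?thesis unfolding coord_involutions_def by blast
  next
    case 3
    then have "\<forall>t. p (id (i, j, t)) = 0"
      using assms(2) x by (cases k) (simp_all add: all_bool_eq)
    then show ?thesis unfolding coord_involutions_def by blast
  qed
qed

theorem mainTheorem8:
  fixes p :: "state3 \<Rightarrow> real"
  assumes "p \<in> simplex7"
    and "\<exists>x. p x = 0"
  shows "p \<in> RBM32 \<longleftrightarrow> (\<forall>x. p x = 0 \<longrightarrow> (\<exists>y. hamming_neighbour x y \<and> p y = 0))"
  unfolding no_isolated_zero_def [symmetric]
proof
  assume "p \<in> RBM32"
  then show "no_isolated_zero p"
    by (simp add: RBM32_iff no_isolated_zero_prod_mixture2)
next
  assume no_isolated: "no_isolated_zero p"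
  obtain x where "p x = 0" using assms(2) ..
  then obtain \<sigma> u v where \<sigma>: "\<sigma> \<in> coord_involutions" and line: "\<forall>k. p (\<sigma> (u, v, k)) = 0"
    using zero_line_exists[OF no_isolated] by blast
  have "\<forall>x. 0 \<le> (p \<circ> \<sigma>) x"
    using assms(1) unfolding simplex7_def comp_apply by blast
  then have "prod_mixture2 (p \<circ> \<sigma>)"
    using no_isolated_zero_comp_coord_swap[OF \<sigma> no_isolated]
    by (rule prod_mixture2_zero_line[where u = u and v = v]) (simp add: line)
  then have "prod_mixture2 p"
    by (rule prod_mixture2_comp_coord_swap[OF \<sigma>])
  with assms(1) show "p \<in> RBM32"
    by (simp add: RBM32_iff)
qed

end
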